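(* Let $\epsilon,\delta\in\{1,i\}$. Let $(M,g)$ be a surface with isothermal coordinates $(x,y)$, $g=e^{f}dv\,dw$, $v=x+\epsilon y$, $w=x-\epsilon y$, and $(N,h)$ a surface with isothermal coordinates $(R,S)$, $h=e^{F(V,W)}dV\,dW=e^F(dR^2-\delta^2dS^2)$, $V=R+\delta S$, $W=R-\delta S$, with curvature $K_N=-2F_{VW}e^{-F}$. Let $u=(R,S):M\to N$ be a nontrivial harmonic map with nonvanishing Jacobian, with $(x,y)$ specific coordinates for $u$ (i.e. $e^FV_vW_v=1=e^FV_wW_w$), and let $\Omega,\Theta$ be functions with $$R_x=2e^{-F/2}\cosh\Omega\cosh\Theta,\quad R_y=2\epsilon e^{-F/2}\sinh\Omega\sinh\Theta,\quad S_x=\tfrac{2}{\delta}e^{-F/2}\cosh\Omega\sinh\Theta,\quad S_y=\tfrac{2\epsilon}{\delta}e^{-F/2}\sinh\Omega\cosh\Theta.$$ Then the equation $$2\Theta_{vw}=e^{-F}\Big((F_V^2-F_{VV})e^{2\Theta}-(F_W^2-F_{WW})e^{-2\Theta}\Big)$$ is the Bäcklund transform of the equation $$\Omega_{vw}=-\frac{K_N}{2}\sinh(2\Omega),$$ where $\Theta$ and $\Omega$ are related by $$\Omega_x-\frac1\epsilon\Theta_y=\frac12F_x\tanh\Omega,\qquad \Omega_y-\epsilon\Theta_x=\frac12F_y\coth\Omega,$$ with $F_x=F_RR_x+F_SS_x$, $F_y=F_RR_y+F_SS_y$. That is, $\Theta$ satisfies the first equation, $\Omega$ satisfies the second, and the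 two are connected by the displayed first-order system.
   Context: Derivatives with respect to $v,w$ are $\partial_v=\tfrac12(\partial_x+\tfrac1\epsilon\partial_y)$, $\partial_w=\tfrac12(\partial_x-\tfrac1\epsilon\partial_y)$. A map $u$ is harmonic if it satisfies the Euler–Lagrange equations of $E(u)=\frac12\int_M e^{F(V,W)}(V_vW_w+V_wW_v)\,dv\,dw$; it is nontrivial if $V_vW_vV_wW_w\neq0$. A Bäcklund transformation is a system of first-order PDEs relating solutions of one PDE to solutions of another PDE; one solution is then called the Bäcklund transform of the other. *)

theory Defs
  imports "HOL-Analysis.Analysis"
begin

definition pdx :: "(real \<times> real \<Rightarrow> 'a::real_normed_vector) \<Rightarrow> real \<times> real \<Rightarrow> 'a" where
  "pdx f = (\<lambda>(x, y). vector_derivative (\<lambda>t. f (t, y)) (at x))"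

definition pdy :: "(real \<times> real \<Rightarrow> 'a::real_normed_vector) \<Rightarrow> real \<times> real \<Rightarrow> 'a" where
  "pdy f = (\<lambda>(x, y). vector_derivative (\<lambda>t. f (x, t)) (at y))"

fun iterd :: "bool list \<Rightarrow> (real \<times> real \<Rightarrow> 'a::real_normed_vector) \<Rightarrow> real \<times> real \<Rightarrow> 'a" where
  "iterd [] f = f"
| "iterd (b # bs) f = (if b then pdx else pdy) (iterd bs f)"

definition smooth2_on :: "(real \<times> real) set \<Rightarrow> (real \<times> real \<Rightarrow> 'a::real_normed_vector) \<Rightarrow> bool" where
  "smooth2_on U f \<longleftrightarrow> (\<forall>ds. iterd ds f differentiable_on U)"

text \<open>Null-coordinate derivatives for v = x + c y, w = x - c y:
  d/dv = (d/dx + (1/c) d/dy)/2 and d/dw = (d/dx - (1/c) d/dy)/2.\<close>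
definition dplus :: "complex \<Rightarrow> (real \<times> real \<Rightarrow> complex) \<Rightarrow> real \<times> real \<Rightarrow> complex" where
  "dplus c f = (\<lambda>p. (pdx f p + pdy f p / c) / 2)"

definition dminus :: "complex \<Rightarrow> (real \<times> real \<Rightarrow> complex) \<Rightarrow> real \<times> real \<Rightarrow> complex" where
  "dminus c f = (\<lambda>p. (pdx f p - pdy f p / c) / 2)"

definition Fc :: "(real \<times> real \<Rightarrow> real) \<Rightarrow> real \<times> real \<Rightarrow> complex" where
  "Fc F = (\<lambda>q. complex_of_real (F q))"

definition FV :: "complex \<Rightarrow> (real \<times> real \<Rightarrow> real) \<Rightarrow> real \<times> real \<Rightarrow> complex" where
  "FV \<delta> F = dplus \<delta> (Fc F)"

definition FW :: "complex \<Rightarrow> (real \<times> real \<Rightarrow> real) \<Rightarrow> real \<times> real \<Rightarrow> complex" where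
  "FW \<delta> F = dminus \<delta> (Fc F)"

definition FVV :: "complex \<Rightarrow> (real \<times> real \<Rightarrow> real) \<Rightarrow> real \<times> real \<Rightarrow> complex" where
  "FVV \<delta> F = dplus \<delta> (FV \<delta> F)"

definition FWW :: "complex \<Rightarrow> (real \<times> real \<Rightarrow> real) \<Rightarrow> real \<times> real \<Rightarrow> complex" where
  "FWW \<delta> F = dminus \<delta> (FW \<delta> F)"

definition FVW :: "complex \<Rightarrow> (real \<times> real \<Rightarrow> real) \<Rightarrow> real \<times> real \<Rightarrow> complex" where
  "FVW \<delta> F = dplus \<delta> (FW \<delta> F)"

definition curvN :: "complex \<Rightarrow> (real \<times> real \<Rightarrow> real) \<Rightarrow> real \<times> real \<Rightarrow> complex" where
  "curvN \<delta> F q = -2 * FVW \<delta> F q * exp (- Fc F q)"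

definition Vmap :: "complex \<Rightarrow> (real \<times> real \<Rightarrow> real) \<Rightarrow> (real \<times> real \<Rightarrow> real) \<Rightarrow> real \<times> real \<Rightarrow> complex" where
  "Vmap \<delta> R S = (\<lambda>p. complex_of_real (R p) + \<delta> * complex_of_real (S p))"

definition Wmap :: "complex \<Rightarrow> (real \<times> real \<Rightarrow> real) \<Rightarrow> (real \<times> real \<Rightarrow> real) \<Rightarrow> real \<times> real \<Rightarrow> complex" where
  "Wmap \<delta> R S = (\<lambda>p. complex_of_real (R p) - \<delta> * complex_of_real (S p))"

text \<open>Harmonic: the Euler-Lagrange equations of
  E(u) = 1/2 \<integral> e^{F(V,W)} (V_v W_w + V_w W_v) dv dw, i.e. (variation in W and in V)
  V_vw + F_V V_v V_w = 0 and W_vw + F_W W_v W_w = 0.\<close>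
definition harmonic_map :: "complex \<Rightarrow> complex \<Rightarrow> (real \<times> real \<Rightarrow> real) \<Rightarrow>
    (real \<times> real \<Rightarrow> real) \<Rightarrow> (real \<times> real \<Rightarrow> real) \<Rightarrow> (real \<times> real) set \<Rightarrow> bool" where
  "harmonic_map \<epsilon> \<delta> F R S U \<longleftrightarrow>
    (\<forall>p\<in>U.
      dplus \<epsilon> (dminus \<epsilon> (Vmap \<delta> R S)) p
        + FV \<delta> F (R p, S p) * dplus \<epsilon> (Vmap \<delta> R S) p * dminus \<epsilon> (Vmap \<delta> R S) p = 0 \<and>
      dplus \<epsilon> (dminus \<epsilon> (Wmap \<delta> R S)) p
        + FW \<delta> F (R p, S p) * dplus \<epsilon> (Wmap \<delta> R S) p * dminus \<epsilon> (Wmap \<delta> R S) p = 0)"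

definition nontrivial_map :: "complex \<Rightarrow> complex \<Rightarrow>
    (real \<times> real \<Rightarrow> real) \<Rightarrow> (real \<times> real \<Rightarrow> real) \<Rightarrow> (real \<times> real) set \<Rightarrow> bool" where
  "nontrivial_map \<epsilon> \<delta> R S U \<longleftrightarrow>
    (\<forall>p\<in>U. dplus \<epsilon> (Vmap \<delta> R S) p * dplus \<epsilon> (Wmap \<delta> R S) p
            * dminus \<epsilon> (Vmap \<delta> R S) p * dminus \<epsilon> (Wmap \<delta> R S) p \<noteq> 0)"

definition nonvanishing_jacobian :: "(real \<times> real \<Rightarrow> real) \<Rightarrow> (real \<times> real \<Rightarrow> real) \<Rightarrow> (real \<times> real) set \<Rightarrow> bool" where
  "nonvanishing_jacobian R S U \<longleftrightarrow> (\<forall>p\<in>U. pdx R p * pdy S p - pdy R p * pdx S p \<noteq> 0)"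

definition specific_coords :: "complex \<Rightarrow> complex \<Rightarrow> (real \<times> real \<Rightarrow> real) \<Rightarrow>
    (real \<times> real \<Rightarrow> real) \<Rightarrow> (real \<times> real \<Rightarrow> real) \<Rightarrow> (real \<times> real) set \<Rightarrow> bool" where
  "specific_coords \<epsilon> \<delta> F R S U \<longleftrightarrow>
    (\<forall>p\<in>U. exp (Fc F (R p, S p)) * dplus \<epsilon> (Vmap \<delta> R S) p * dplus \<epsilon> (Wmap \<delta> R S) p = 1 \<and>
           exp (Fc F (R p, S p)) * dminus \<epsilon> (Vmap \<delta> R S) p * dminus \<epsilon> (Wmap \<delta> R S) p = 1)"

definition Fx :: "(real \<times> real \<Rightarrow> real) \<Rightarrow> (real \<times> real \<Rightarrow> real) \<Rightarrow> (real \<times> real \<Rightarrow> real) \<Rightarrow> real \<times> real \<Rightarrow> real" where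
  "Fx F R S p = pdx F (R p, S p) * pdx R p + pdy F (R p, S p) * pdx S p"

definition Fy :: "(real \<times> real \<Rightarrow> real) \<Rightarrow> (real \<times> real \<Rightarrow> real) \<Rightarrow> (real \<times> real \<Rightarrow> real) \<Rightarrow> real \<times> real \<Rightarrow> real" where
  "Fy F R S p = pdx F (R p, S p) * pdy R p + pdy F (R p, S p) * pdy S p"

end

theory Submission
  imports Defs
begin

text \<open>
  Write V = R + \<delta> S, W = R - \<delta> S and E = e^(-F/2). In the null coordinates v, w the
  hypotheses on R_x, R_y, S_x, S_y say exactly that V_v = E e^(\<Theta> + \<Omega>), V_w = E e^(\<Theta> - \<Omega>),
  W_v = E e^(-\<Theta> - \<Omega>) and W_w = E e^(\<Omega> - \<Theta>). Taking logarithmic derivatives, the harmonic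
  map equation V_vw = -F_V V_v V_w (in both orders of differentiation, by symmetry of mixed
  partials) becomes the first-order system
  (\<Theta> - \<Omega>)_v = (F_W W_v - F_V V_v)/2,  (\<Theta> + \<Omega>)_w = (F_W W_w - F_V V_w)/2,
  which is the Baecklund relation between \<Omega> and \<Theta> once rewritten in x and y.
  Differentiating it once more and eliminating V_vw and W_vw again by the harmonic map equations
  expresses (\<Theta> - \<Omega>)_vw and (\<Theta> + \<Omega>)_vw through F_V, F_W, F_VV, F_VW, F_WW and products of the
  frame derivatives; their sum and difference are the two second-order equations.
\<close>

lemma pdx_eq_derivative:
  assumes "(f has_derivative f') (at p)"
  shows "pdx f p = f' (1, 0)"
proof -
  obtain x y where p: "p = (x, y)" by (cases p)
  interpret bounded_linear f' using assms by (rule has_derivative_bounded_linear)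
  have "((\<lambda>t. (t, y)) has_derivative (\<lambda>h. (h, 0))) (at x)"
    by (auto intro!: derivative_eq_intros)
  from has_derivative_compose[OF this, of f f'] assms p
  have "((\<lambda>t. f (t, y)) has_derivative (\<lambda>h. h *\<^sub>R f' (1, 0))) (at x)"
    by (simp add: scale[symmetric])
  then show ?thesis
    by (simp add: pdx_def p vector_derivative_at has_vector_derivative_def)
qed

lemma pdy_eq_derivative:
  assumes "(f has_derivative f') (at p)"
  shows "pdy f p = f' (0, 1)"
proof -
  obtain x y where p: "p = (x, y)" by (cases p)
  interpret bounded_linear f' using assms by (rule has_derivative_bounded_linear)
  have "((\<lambda>t. (x, t)) has_derivative (\<lambda>h. (0, h))) (at y)"
    by (auto intro!: derivative_eq_intros)
  from has_derivative_compose[OF this, of f f'] assms p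
  have "((\<lambda>t. f (x, t)) has_derivative (\<lambda>h. h *\<^sub>R f' (0, 1))) (at y)"
    by (simp add: scale[symmetric])
  then show ?thesis
    by (simp add: pdy_def p vector_derivative_at has_vector_derivative_def)
qed

lemma has_derivative_partials:
  assumes "f differentiable at p"
  shows "(f has_derivative (\<lambda>z. fst z *\<^sub>R pdx f p + snd z *\<^sub>R pdy f p)) (at p)"
proof -
  obtain f' where d: "(f has_derivative f') (at p)"
    using assms by (auto simp: differentiable_def)
  interpret bounded_linear f' using d by (rule has_derivative_bounded_linear)
  have "f' = (\<lambda>z. fst z *\<^sub>R f' (1, 0) + snd z *\<^sub>R f' (0, 1))"
  proof
    fix z :: "real \<times> real"
    have "z = fst z *\<^sub>R (1, 0) + snd z *\<^sub>R (0, 1)" by (cases z) simp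
    then have "f' z = f' (fst z *\<^sub>R (1, 0) + snd z *\<^sub>R (0, 1))" by simp
    also have "\<dots> = fst z *\<^sub>R f' (1, 0) + snd z *\<^sub>R f' (0, 1)" by (simp only: add scale)
    finally show "f' z = fst z *\<^sub>R f' (1, 0) + snd z *\<^sub>R f' (0, 1)" .
  qed
  with d show ?thesis
    by (simp add: pdx_eq_derivative[OF d] pdy_eq_derivative[OF d])
qed

lemma has_vector_derivative_pdx:
  assumes "f differentiable at (a, b)"
  shows "((\<lambda>t. f (t, b)) has_vector_derivative pdx f (a, b)) (at a)"
proof -
  have "((\<lambda>t. (t, b)) has_derivative (\<lambda>h. (h, 0))) (at a)"
    by (auto intro!: derivative_eq_intros)
  from has_derivative_compose[OF this has_derivative_partials[OF assms]] show ?thesis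
    by (simp add: has_vector_derivative_def)
qed

lemma has_vector_derivative_pdy:
  assumes "f differentiable at (a, b)"
  shows "((\<lambda>t. f (a, t)) has_vector_derivative pdy f (a, b)) (at b)"
proof -
  have "((\<lambda>t. (a, t)) has_derivative (\<lambda>h. (0, h))) (at b)"
    by (auto intro!: derivative_eq_intros)
  from has_derivative_compose[OF this has_derivative_partials[OF assms]] show ?thesis
    by (simp add: has_vector_derivative_def)
qed

lemma pdx_cong:
  assumes "open U" "p \<in> U" "\<And>q. q \<in> U \<Longrightarrow> f q = g q"
  shows "pdx f p = pdx g p"
proof -
  obtain x y where p: "p = (x, y)" by (cases p)
  let ?A = "{t. (t, y) \<in> U}"
  have open_slice: "open ?A"
    using assms(1) by (intro open_vimage[of U "\<lambda>t. (t, y)", unfolded vimage_def])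
      (auto intro!: continuous_intros)
  have x_slice: "x \<in> ?A" using assms(2) p by simp
  have "((\<lambda>t. f (t, y)) has_vector_derivative d) (at x) \<longleftrightarrow>
      ((\<lambda>t. g (t, y)) has_vector_derivative d) (at x)" for d
    unfolding has_vector_derivative_def
    using has_derivative_transform_within_open[OF _ open_slice x_slice] assms(3) by (metis (no_types, lifting) mem_Collect_eq)
  then show ?thesis by (simp add: pdx_def p vector_derivative_def)
qed

lemma pdy_cong:
  assumes "open U" "p \<in> U" "\<And>q. q \<in> U \<Longrightarrow> f q = g q"
  shows "pdy f p = pdy g p"
proof -
  obtain x y where p: "p = (x, y)" by (cases p)
  let ?A = "{t. (x, t) \<in> U}"
  have open_slice: "open ?A"
    using assms(1) by (intro open_vimage[of U "\<lambda>t. (x, t)", unfolded vimage_def])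
      (auto intro!: continuous_intros)
  have y_slice: "y \<in> ?A" using assms(2) p by simp
  have "((\<lambda>t. f (x, t)) has_vector_derivative d) (at y) \<longleftrightarrow>
      ((\<lambda>t. g (x, t)) has_vector_derivative d) (at y)" for d
    unfolding has_vector_derivative_def
    using has_derivative_transform_within_open[OF _ open_slice y_slice] assms(3) by (metis (no_types, lifting) mem_Collect_eq)
  then show ?thesis by (simp add: pdy_def p vector_derivative_def)
qed

lemma differentiable_cong:
  assumes "open U" "p \<in> U" "\<And>q. q \<in> U \<Longrightarrow> f q = g q" "f differentiable at p"
  shows "g differentiable at p"
  using assms has_derivative_transform_within_open unfolding differentiable_def by metis

lemma smooth2_on_differentiable:
  assumes "smooth2_on U f" "open U" "p \<in> U"
  shows "iterd ds f differentiable at p"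
  using assms unfolding smooth2_on_def by (meson differentiable_on_eq_differentiable_at)

lemma smooth2_on_partials_differentiable:
  assumes "smooth2_on U f" "open U" "p \<in> U"
  shows "f differentiable at p" "pdx f differentiable at p" "pdy f differentiable at p"
  using smooth2_on_differentiable[OF assms, of "[]"] smooth2_on_differentiable[OF assms, of "[True]"]
    smooth2_on_differentiable[OF assms, of "[False]"]
  by simp_all

section \<open>Symmetry of mixed partial derivatives\<close>

lemma norm_increment_linearization_le:
  fixes \<phi> :: "real \<Rightarrow> 'a::real_normed_vector"
  assumes deriv: "\<And>t. t \<in> closed_segment a b \<Longrightarrow> (\<phi> has_vector_derivative \<phi>' t) (at t)"
    and bound: "\<And>t. t \<in> closed_segment a b \<Longrightarrow> norm (\<phi>' t - c) \<le> M"
  shows "norm (\<phi> b - \<phi> a - (b - a) *\<^sub>R c) \<le> M * \<bar>b - a\<bar>"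
proof -
  let ?\<psi> = "\<lambda>t. \<phi> t - t *\<^sub>R c"
  have "(?\<psi> has_derivative (\<lambda>s. s *\<^sub>R (\<phi>' t - c))) (at t within closed_segment a b)"
    if "t \<in> closed_segment a b" for t
  proof -
    have "(?\<psi> has_vector_derivative \<phi>' t - c) (at t)"
      using deriv[OF that] by (auto intro!: derivative_eq_intros)
    then show ?thesis
      unfolding has_vector_derivative_def by (rule has_derivative_at_withinI)
  qed
  moreover have "onorm (\<lambda>s::real. s *\<^sub>R d) = norm d" for d :: 'a
    using onorm_scaleR_left[OF bounded_linear_ident[where 'a=real]] onorm_id[where 'a=real] by simp
  ultimately have "norm (?\<psi> b - ?\<psi> a) \<le> M * norm (b - a)"
    by (intro differentiable_bound[OF convex_closed_segment]) (auto simp: bound)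
  then show ?thesis by (simp add: algebra_simps)
qed

lemma linearization_vertical_increment:
  fixes gx :: "real \<Rightarrow> real \<Rightarrow> 'a::real_normed_vector"
  assumes L: "bounded_linear L" and e: "e \<ge> 0"
    and approx: "\<And>z. norm (z - (a0, b0)) < d \<Longrightarrow>
      norm (gx (fst z) (snd z) - gx a0 b0 - L (z - (a0, b0))) \<le> e * norm (z - (a0, b0))"
    and t: "\<bar>t - a0\<bar> \<le> \<bar>h\<bar>" and h: "2 * \<bar>h\<bar> < d"
  shows "norm (gx t (b0 + h) - gx t b0 - h *\<^sub>R L (0, 1)) \<le> 3 * e * \<bar>h\<bar>"
proof -
  interpret L: bounded_linear L by (fact L)
  define z1 where "z1 = (t, b0 + h)"
  define z0 where "z0 = (t, b0)"
  have n1: "norm (z1 - (a0, b0)) \<le> 2 * \<bar>h\<bar>"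
    using norm_Pair_le[of "t - a0" h] t by (simp add: z1_def)
  have n0: "norm (z0 - (a0, b0)) \<le> \<bar>h\<bar>"
    using t by (simp add: z0_def norm_Pair)
  have "L (z1 - (a0, b0)) - L (z0 - (a0, b0)) = L (h *\<^sub>R (0, 1))"
    by (simp add: L.diff[symmetric] z1_def z0_def)
  also have "\<dots> = h *\<^sub>R L (0, 1)" by (rule L.scale)
  finally have "gx t (b0 + h) - gx t b0 - h *\<^sub>R L (0, 1) =
      (gx (fst z1) (snd z1) - gx a0 b0 - L (z1 - (a0, b0)))
      - (gx (fst z0) (snd z0) - gx a0 b0 - L (z0 - (a0, b0)))"
    by (simp add: z1_def z0_def algebra_simps)
  also have "norm \<dots> \<le> e * norm (z1 - (a0, b0)) + e * norm (z0 - (a0, b0))"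
    using n1 n0 h by (intro order_trans[OF norm_triangle_ineq4] add_mono approx) auto
  also have "\<dots> \<le> e * (2 * \<bar>h\<bar>) + e * \<bar>h\<bar>"
    using n1 n0 e by (intro add_mono mult_left_mono) auto
  finally show ?thesis by simp
qed

lemma second_difference_expansion:
  fixes g gx :: "real \<Rightarrow> real \<Rightarrow> 'a::real_normed_vector"
  assumes r: "r > 0"
    and pd: "\<And>a b. norm ((a, b) - (a0, b0)) < r \<Longrightarrow> ((\<lambda>t. g t b) has_vector_derivative gx a b) (at a)"
    and L: "((\<lambda>z. gx (fst z) (snd z)) has_derivative L) (at (a0, b0))"
    and e: "e > 0"
  shows "\<exists>d>0. \<forall>h. \<bar>h\<bar> < d \<longrightarrow>
     norm (g (a0 + h) (b0 + h) - g (a0 + h) b0 - g a0 (b0 + h) + g a0 b0 - h\<^sup>2 *\<^sub>R L (0, 1)) \<le> e * h\<^sup>2"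
proof -
  have "e / 3 > 0" using e by simp
  then obtain d1 where d1: "d1 > 0" and approx: "\<And>z. norm (z - (a0, b0)) < d1 \<Longrightarrow>
      norm (gx (fst z) (snd z) - gx a0 b0 - L (z - (a0, b0))) \<le> (e / 3) * norm (z - (a0, b0))"
    using L[unfolded has_derivative_at_alt] by (metis fst_conv snd_conv)
  define d where "d = min d1 r / 2"
  have "norm (g (a0 + h) (b0 + h) - g (a0 + h) b0 - g a0 (b0 + h) + g a0 b0 - h\<^sup>2 *\<^sub>R L (0, 1)) \<le> e * h\<^sup>2"
    if h: "\<bar>h\<bar> < d" for h
  proof -
    have near: "norm ((t, b) - (a0, b0)) < r" if "\<bar>t - a0\<bar> \<le> \<bar>h\<bar>" "\<bar>b - b0\<bar> \<le> \<bar>h\<bar>" for t b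
      using norm_Pair_le[of "t - a0" "b - b0"] that h by (simp add: d_def)
    have seg: "\<bar>t - a0\<bar> \<le> \<bar>h\<bar>" if "t \<in> closed_segment a0 (a0 + h)" for t
      using that by (auto simp: closed_segment_eq_real_ivl split: if_splits)
    have diff_eq: "(g (a0 + h) (b0 + h) - g (a0 + h) b0) - (g a0 (b0 + h) - g a0 b0)
        - ((a0 + h) - a0) *\<^sub>R (h *\<^sub>R L (0, 1))
        = g (a0 + h) (b0 + h) - g (a0 + h) b0 - g a0 (b0 + h) + g a0 b0 - h\<^sup>2 *\<^sub>R L (0, 1)"
      by (simp add: power2_eq_square)
    have bound_eq: "3 * (e / 3) * \<bar>h\<bar> * \<bar>(a0 + h) - a0\<bar> = e * h\<^sup>2"
      by (simp add: power2_eq_square abs_mult_self_eq)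
    have "norm ((g (a0 + h) (b0 + h) - g (a0 + h) b0) - (g a0 (b0 + h) - g a0 b0)
        - ((a0 + h) - a0) *\<^sub>R (h *\<^sub>R L (0, 1))) \<le> (3 * (e / 3) * \<bar>h\<bar>) * \<bar>(a0 + h) - a0\<bar>"
    proof (rule norm_increment_linearization_le)
      fix t assume "t \<in> closed_segment a0 (a0 + h)"
      note t = seg[OF this]
      show "((\<lambda>t. g t (b0 + h) - g t b0) has_vector_derivative gx t (b0 + h) - gx t b0) (at t)"
        using t by (intro has_vector_derivative_diff pd near) auto
      show "norm (gx t (b0 + h) - gx t b0 - h *\<^sub>R L (0, 1)) \<le> 3 * (e / 3) * \<bar>h\<bar>"
        using t h e has_derivative_bounded_linear[OF L]
        by (intro linearization_vertical_increment[where d = d1 and e = "e / 3", OF _ _ approx])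
          (auto simp: d_def)
    qed
    then show ?thesis by (simp only: diff_eq bound_eq)
  qed
  moreover have "d > 0" using d1 r by (simp add: d_def)
  ultimately show ?thesis by blast
qed

lemma second_order_coefficient_unique:
  fixes A B :: "'a::real_normed_vector"
  assumes A: "\<And>e. e > 0 \<Longrightarrow> \<exists>d>0. \<forall>h. \<bar>h\<bar> < d \<longrightarrow> norm (D h - h\<^sup>2 *\<^sub>R A) \<le> e * h\<^sup>2"
    and B: "\<And>e. e > 0 \<Longrightarrow> \<exists>d>0. \<forall>h. \<bar>h\<bar> < d \<longrightarrow> norm (D h - h\<^sup>2 *\<^sub>R B) \<le> e * h\<^sup>2"
  shows "A = B"
proof -
  have "norm (A - B) \<le> 0 + e" if e: "e > 0" for e
  proof -
    obtain d1 where d1: "d1 > 0" "\<forall>h. \<bar>h\<bar> < d1 \<longrightarrow> norm (D h - h\<^sup>2 *\<^sub>R A) \<le> (e / 2) * h\<^sup>2"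
      using A e by (meson half_gt_zero)
    obtain d2 where d2: "d2 > 0" "\<forall>h. \<bar>h\<bar> < d2 \<longrightarrow> norm (D h - h\<^sup>2 *\<^sub>R B) \<le> (e / 2) * h\<^sup>2"
      using B e by (meson half_gt_zero)
    define h where "h = min d1 d2 / 2"
    have h: "h \<noteq> 0" "\<bar>h\<bar> < d1" "\<bar>h\<bar> < d2" using d1 d2 by (auto simp: h_def)
    have "h\<^sup>2 * norm (A - B) = norm (h\<^sup>2 *\<^sub>R (A - B))" by simp
    also have "h\<^sup>2 *\<^sub>R (A - B) = (D h - h\<^sup>2 *\<^sub>R B) - (D h - h\<^sup>2 *\<^sub>R A)"
      by (simp add: scaleR_diff_right)
    also have "norm \<dots> \<le> norm (D h - h\<^sup>2 *\<^sub>R B) + norm (D h - h\<^sup>2 *\<^sub>R A)"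
      by (rule norm_triangle_ineq4)
    also have "\<dots> \<le> (e / 2) * h\<^sup>2 + (e / 2) * h\<^sup>2"
      using d1 d2 h by (intro add_mono) auto
    also have "\<dots> = h\<^sup>2 * e" by simp
    finally have "h\<^sup>2 * norm (A - B) \<le> h\<^sup>2 * e" .
    moreover have "h\<^sup>2 > 0" using h by simp
    ultimately show ?thesis by simp
  qed
  then have "norm (A - B) \<le> 0" by (rule field_le_epsilon)
  then show ?thesis by simp
qed

text \<open>Both mixed partials are the second-order coefficient of the same mixed second difference
  f(x+h, y+h) - f(x+h, y) - f(x, y+h) + f(x, y), expanded once in x first and once in y first.\<close>

lemma pdx_pdy_commute:
  fixes f :: "real \<times> real \<Rightarrow> 'a::real_normed_vector"
  assumes "open U" "p \<in> U" and f: "\<And>q. q \<in> U \<Longrightarrow> f differentiable at q"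
    and fx: "pdx f differentiable at p" and fy: "pdy f differentiable at p"
  shows "pdx (pdy f) p = pdy (pdx f) p"
proof -
  obtain x0 y0 where p: "p = (x0, y0)" by (cases p)
  obtain r where r: "r > 0" "ball p r \<subseteq> U"
    using assms(1,2) by (auto simp: open_contains_ball)
  have inU: "(a, b) \<in> U" if "norm ((a, b) - p) < r" for a b
    using that r by (auto simp: dist_norm norm_minus_commute)
  let ?D = "\<lambda>h. f (x0 + h, y0 + h) - f (x0 + h, y0) - f (x0, y0 + h) + f (x0, y0)"
  show ?thesis
  proof (rule second_order_coefficient_unique[where D = ?D])
    fix e :: real assume e: "e > 0"
    have swap: "((\<lambda>z. (snd z, fst z)) has_derivative (\<lambda>z. (snd z, fst z))) (at (y0, x0))"
      by (auto intro!: derivative_eq_intros)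
    have Ly: "((\<lambda>z. pdy f (snd z, fst z)) has_derivative
        (\<lambda>z. snd z *\<^sub>R pdx (pdy f) p + fst z *\<^sub>R pdy (pdy f) p)) (at (y0, x0))"
    proof -
      have "\<And>g'. (pdy f has_derivative g') (at (x0, y0)) \<Longrightarrow>
          ((\<lambda>z. pdy f (snd z, fst z)) has_derivative (\<lambda>z. g' (snd z, fst z))) (at (y0, x0))"
        using has_derivative_compose[OF swap, of "pdy f"] by simp
      from this[OF has_derivative_partials[OF fy, unfolded p]] show ?thesis by (simp add: p)
    qed
    have fy_near: "((\<lambda>t. f (b, t)) has_vector_derivative pdy f (b, a)) (at a)"
      if "norm ((a, b) - (y0, x0)) < r" for a b
      using that by (intro has_vector_derivative_pdy f inU) (simp add: p norm_Pair add.commute)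
    show "\<exists>d>0. \<forall>h. \<bar>h\<bar> < d \<longrightarrow> norm (?D h - h\<^sup>2 *\<^sub>R pdx (pdy f) p) \<le> e * h\<^sup>2"
      using second_difference_expansion[where g = "\<lambda>a b. f (b, a)", OF r(1) fy_near Ly e]
      by (simp add: algebra_simps)
  next
    fix e :: real assume e: "e > 0"
    have Lx: "((\<lambda>z. pdx f (fst z, snd z)) has_derivative
        (\<lambda>z. fst z *\<^sub>R pdx (pdx f) p + snd z *\<^sub>R pdy (pdx f) p)) (at (x0, y0))"
      using has_derivative_partials[OF fx] p by simp
    have fx_near: "((\<lambda>t. f (t, b)) has_vector_derivative pdx f (a, b)) (at a)"
      if "norm ((a, b) - (x0, y0)) < r" for a b
      using that by (intro has_vector_derivative_pdx f inU) (simp add: p)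
    show "\<exists>d>0. \<forall>h. \<bar>h\<bar> < d \<longrightarrow> norm (?D h - h\<^sup>2 *\<^sub>R pdy (pdx f) p) \<le> e * h\<^sup>2"
      using second_difference_expansion[where g = "\<lambda>a b. f (a, b)", OF r(1) fx_near Lx e]
      by simp
  qed
qed

lemma pdx_const [simp]: "pdx (\<lambda>q. c) p = 0"
  using pdx_eq_derivative[OF has_derivative_const[of c]] by simp

lemma pdy_const [simp]: "pdy (\<lambda>q. c) p = 0"
  using pdy_eq_derivative[OF has_derivative_const[of c]] by simp

lemma pdx_add [simp]:
  "f differentiable at p \<Longrightarrow> g differentiable at p \<Longrightarrow>
    pdx (\<lambda>q. f q + g q :: complex) p = pdx f p + pdx g p"
  using pdx_eq_derivative[OF has_derivative_add[OF has_derivative_partials has_derivative_partials]]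
  by simp

lemma pdy_add [simp]:
  "f differentiable at p \<Longrightarrow> g differentiable at p \<Longrightarrow>
    pdy (\<lambda>q. f q + g q :: complex) p = pdy f p + pdy g p"
  using pdy_eq_derivative[OF has_derivative_add[OF has_derivative_partials has_derivative_partials]]
  by simp

lemma pdx_diff [simp]:
  "f differentiable at p \<Longrightarrow> g differentiable at p \<Longrightarrow>
    pdx (\<lambda>q. f q - g q :: complex) p = pdx f p - pdx g p"
  using pdx_eq_derivative[OF has_derivative_diff[OF has_derivative_partials has_derivative_partials]]
  by simp

lemma pdy_diff [simp]:
  "f differentiable at p \<Longrightarrow> g differentiable at p \<Longrightarrow>
    pdy (\<lambda>q. f q - g q :: complex) p = pdy f p - pdy g p"
  using pdy_eq_derivative[OF has_derivative_diff[OF has_derivative_partials has_derivative_partials]]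
  by simp

lemma pdx_mult [simp]:
  assumes "f differentiable at p" "g differentiable at p"
  shows "pdx (\<lambda>q. f q * g q :: complex) p = pdx f p * g p + f p * pdx g p"
  using pdx_eq_derivative[OF has_derivative_mult[OF has_derivative_partials[OF assms(1)]
      has_derivative_partials[OF assms(2)]]]
  by (simp add: scaleR_conv_of_real algebra_simps)

lemma pdy_mult [simp]:
  assumes "f differentiable at p" "g differentiable at p"
  shows "pdy (\<lambda>q. f q * g q :: complex) p = pdy f p * g p + f p * pdy g p"
  using pdy_eq_derivative[OF has_derivative_mult[OF has_derivative_partials[OF assms(1)]
      has_derivative_partials[OF assms(2)]]]
  by (simp add: scaleR_conv_of_real algebra_simps)

lemma pdx_cmult [simp]:
  "f differentiable at p \<Longrightarrow> pdx (\<lambda>q. c * f q :: complex) p = c * pdx f p"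
  using pdx_mult[of "\<lambda>q. c" p f] by simp

lemma pdy_cmult [simp]:
  "f differentiable at p \<Longrightarrow> pdy (\<lambda>q. c * f q :: complex) p = c * pdy f p"
  using pdy_mult[of "\<lambda>q. c" p f] by simp

lemma pdx_divide_const [simp]:
  "f differentiable at p \<Longrightarrow> pdx (\<lambda>q. f q / c :: complex) p = pdx f p / c"
  using pdx_cmult[of f p "inverse c"] by (simp add: field_simps)

lemma pdy_divide_const [simp]:
  "f differentiable at p \<Longrightarrow> pdy (\<lambda>q. f q / c :: complex) p = pdy f p / c"
  using pdy_cmult[of f p "inverse c"] by (simp add: field_simps)

lemma differentiable_divide_const [simp]:
  "f differentiable at p \<Longrightarrow> (\<lambda>x. f x / (c :: 'a::real_normed_field)) differentiable at p"
  unfolding divide_inverse by (intro differentiable_mult differentiable_const)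

lemma has_derivative_cexp_compose:
  assumes "(f has_derivative f') (at p)"
  shows "((\<lambda>q. exp (f q :: complex)) has_derivative (\<lambda>z. exp (f p) * f' z)) (at p)"
  using has_derivative_compose[OF assms DERIV_exp[of "f p", unfolded has_field_derivative_def]]
  by simp

lemma pdx_exp [simp]:
  "f differentiable at p \<Longrightarrow> pdx (\<lambda>q. exp (f q :: complex)) p = exp (f p) * pdx f p"
  using pdx_eq_derivative[OF has_derivative_cexp_compose[OF has_derivative_partials]] by simp

lemma pdy_exp [simp]:
  "f differentiable at p \<Longrightarrow> pdy (\<lambda>q. exp (f q :: complex)) p = exp (f p) * pdy f p"
  using pdy_eq_derivative[OF has_derivative_cexp_compose[OF has_derivative_partials]] by simp

lemma pdx_of_real [simp]:
  "f differentiable at p \<Longrightarrow> pdx (\<lambda>q. complex_of_real (f q)) p = complex_of_real (pdx f p)"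
  using pdx_eq_derivative[OF bounded_linear.has_derivative[OF bounded_linear_of_real has_derivative_partials]]
  by simp

lemma pdy_of_real [simp]:
  "f differentiable at p \<Longrightarrow> pdy (\<lambda>q. complex_of_real (f q)) p = complex_of_real (pdy f p)"
  using pdy_eq_derivative[OF bounded_linear.has_derivative[OF bounded_linear_of_real has_derivative_partials]]
  by simp

lemma differentiable_of_real_compose [simp]:
  "f differentiable at p \<Longrightarrow> (\<lambda>q. complex_of_real (f q)) differentiable at p"
  unfolding differentiable_def by (metis bounded_linear.has_derivative bounded_linear_of_real)

lemma differentiable_comp_pair [simp]:
  fixes R S :: "real \<times> real \<Rightarrow> real" and G :: "real \<times> real \<Rightarrow> 'a::real_normed_vector"
  assumes "G differentiable at (R p, S p)" "R differentiable at p" "S differentiable at p"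
  shows "(\<lambda>q. G (R q, S q)) differentiable at p"
  using differentiable_chain_at[OF differentiable_Pair[OF assms(2,3)] assms(1)] by (simp add: o_def)

lemma has_derivative_comp_pair:
  fixes R S :: "real \<times> real \<Rightarrow> real" and G :: "real \<times> real \<Rightarrow> 'a::real_normed_vector"
  assumes "G differentiable at (R p, S p)" "R differentiable at p" "S differentiable at p"
  shows "((\<lambda>q. G (R q, S q)) has_derivative
    (\<lambda>z. (fst z * pdx R p + snd z * pdy R p) *\<^sub>R pdx G (R p, S p)
       + (fst z * pdx S p + snd z * pdy S p) *\<^sub>R pdy G (R p, S p))) (at p)"
  using has_derivative_compose[OF has_derivative_Pair[OF has_derivative_partials[OF assms(2)]
      has_derivative_partials[OF assms(3)]] has_derivative_partials[OF assms(1)]]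
  by simp

lemma pdx_comp_pair:
  fixes R S :: "real \<times> real \<Rightarrow> real" and G :: "real \<times> real \<Rightarrow> complex"
  assumes "G differentiable at (R p, S p)" "R differentiable at p" "S differentiable at p"
  shows "pdx (\<lambda>q. G (R q, S q)) p =
    complex_of_real (pdx R p) * pdx G (R p, S p) + complex_of_real (pdx S p) * pdy G (R p, S p)"
  using pdx_eq_derivative[OF has_derivative_comp_pair[OF assms]] by (simp add: scaleR_conv_of_real)

lemma pdy_comp_pair:
  fixes R S :: "real \<times> real \<Rightarrow> real" and G :: "real \<times> real \<Rightarrow> complex"
  assumes "G differentiable at (R p, S p)" "R differentiable at p" "S differentiable at p"
  shows "pdy (\<lambda>q. G (R q, S q)) p =
    complex_of_real (pdy R p) * pdx G (R p, S p) + complex_of_real (pdy S p) * pdy G (R p, S p)"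
  using pdy_eq_derivative[OF has_derivative_comp_pair[OF assms]] by (simp add: scaleR_conv_of_real)

lemma Wmap_eq_Vmap_uminus: "Wmap \<delta> R S = Vmap (- \<delta>) R S"
  by (simp add: Wmap_def Vmap_def fun_eq_iff)

lemma differentiable_Vmap:
  "R differentiable at p \<Longrightarrow> S differentiable at p \<Longrightarrow> Vmap \<delta> R S differentiable at p"
  unfolding Vmap_def by (intro differentiable_add differentiable_mult) simp_all

lemma pdx_Vmap:
  "R differentiable at p \<Longrightarrow> S differentiable at p \<Longrightarrow>
    pdx (Vmap \<delta> R S) p = complex_of_real (pdx R p) + \<delta> * complex_of_real (pdx S p)"
  unfolding Vmap_def by simp

lemma pdy_Vmap:
  "R differentiable at p \<Longrightarrow> S differentiable at p \<Longrightarrow>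
    pdy (Vmap \<delta> R S) p = complex_of_real (pdy R p) + \<delta> * complex_of_real (pdy S p)"
  unfolding Vmap_def by simp

lemma partials_Vmap_differentiable:
  assumes R: "smooth2_on U R" and S: "smooth2_on U S" and "open U" "p \<in> U"
  shows "pdx (Vmap \<delta> R S) differentiable at p" "pdy (Vmap \<delta> R S) differentiable at p"
proof -
  note dR = smooth2_on_partials_differentiable[OF R \<open>open U\<close>]
  note dS = smooth2_on_partials_differentiable[OF S \<open>open U\<close>]
  show "pdx (Vmap \<delta> R S) differentiable at p"
    by (rule differentiable_cong[OF \<open>open U\<close> \<open>p \<in> U\<close>, of "Vmap \<delta> (pdx R) (pdx S)"])
      (simp_all add: pdx_Vmap Vmap_def dR dS \<open>p \<in> U\<close> differentiable_Vmap)
  show "pdy (Vmap \<delta> R S) differentiable at p"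
    by (rule differentiable_cong[OF \<open>open U\<close> \<open>p \<in> U\<close>, of "Vmap \<delta> (pdy R) (pdy S)"])
      (simp_all add: pdy_Vmap Vmap_def dR dS \<open>p \<in> U\<close> differentiable_Vmap)
qed

lemma pdx_Fc: "F differentiable at q \<Longrightarrow> pdx (Fc F) q = complex_of_real (pdx F q)"
  unfolding Fc_def by simp

lemma pdy_Fc: "F differentiable at q \<Longrightarrow> pdy (Fc F) q = complex_of_real (pdy F q)"
  unfolding Fc_def by simp

lemma partials_Fc_differentiable:
  assumes F: "smooth2_on D F" and "open D" "q \<in> D"
  shows "Fc F differentiable at q" "pdx (Fc F) differentiable at q" "pdy (Fc F) differentiable at q"
proof -
  note dF = smooth2_on_partials_differentiable[OF F \<open>open D\<close>]
  show "Fc F differentiable at q"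
    unfolding Fc_def using dF(1)[OF \<open>q \<in> D\<close>] by simp
  show "pdx (Fc F) differentiable at q"
    by (rule differentiable_cong[OF \<open>open D\<close> \<open>q \<in> D\<close>, of "Fc (pdx F)"])
      (simp_all add: Fc_def dF \<open>q \<in> D\<close>)
  show "pdy (Fc F) differentiable at q"
    by (rule differentiable_cong[OF \<open>open D\<close> \<open>q \<in> D\<close>, of "Fc (pdy F)"])
      (simp_all add: Fc_def dF \<open>q \<in> D\<close>)
qed

lemma pdx_eq_dplus_add_dminus: "pdx f p = dplus c f p + dminus c f p"
  by (simp add: dplus_def dminus_def field_simps)

lemma pdy_eq_dplus_diff_dminus: "c \<noteq> 0 \<Longrightarrow> pdy f p = c * (dplus c f p - dminus c f p)"
  by (simp add: dplus_def dminus_def field_simps)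

lemma dplus_cong:
  assumes "open U" "p \<in> U" "\<And>q. q \<in> U \<Longrightarrow> f q = g q"
  shows "dplus c f p = dplus c g p" "dminus c f p = dminus c g p"
  unfolding dplus_def dminus_def using pdx_cong[OF assms] pdy_cong[OF assms] by simp_all

lemma dplus_differentiable:
  assumes "pdx f differentiable at p" "pdy f differentiable at p"
  shows "dplus c f differentiable at p" "dminus c f differentiable at p"
  unfolding dplus_def dminus_def using assms by simp_all

lemma dplus_add [simp]:
  assumes "f differentiable at p" "g differentiable at p"
  shows "dplus c (\<lambda>q. f q + g q) p = dplus c f p + dplus c g p"
    "dminus c (\<lambda>q. f q + g q) p = dminus c f p + dminus c g p"
  unfolding dplus_def dminus_def using assms by (simp_all add: add_divide_distrib diff_divide_distrib algebra_simps)

lemma dplus_diff [simp]: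
  assumes "f differentiable at p" "g differentiable at p"
  shows "dplus c (\<lambda>q. f q - g q) p = dplus c f p - dplus c g p"
    "dminus c (\<lambda>q. f q - g q) p = dminus c f p - dminus c g p"
  unfolding dplus_def dminus_def using assms by (simp_all add: add_divide_distrib diff_divide_distrib algebra_simps)

lemma dplus_mult [simp]:
  assumes "f differentiable at p" "g differentiable at p"
  shows "dplus c (\<lambda>q. f q * g q) p = dplus c f p * g p + f p * dplus c g p"
    "dminus c (\<lambda>q. f q * g q) p = dminus c f p * g p + f p * dminus c g p"
  unfolding dplus_def dminus_def using assms by (simp_all add: add_divide_distrib diff_divide_distrib algebra_simps)

lemma dplus_divide_const [simp]:
  assumes "f differentiable at p"
  shows "dplus c (\<lambda>q. f q / k) p = dplus c f p / k"
    "dminus c (\<lambda>q. f q / k) p = dminus c f p / k"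
  unfolding dplus_def dminus_def using assms by (simp_all add: add_divide_distrib diff_divide_distrib algebra_simps)

lemma dplus_exp [simp]:
  assumes "f differentiable at p"
  shows "dplus c (\<lambda>q. exp (f q)) p = exp (f p) * dplus c f p"
    "dminus c (\<lambda>q. exp (f q)) p = exp (f p) * dminus c f p"
  unfolding dplus_def dminus_def using assms by (simp_all add: add_divide_distrib diff_divide_distrib algebra_simps)

lemma dplus_dminus_commute:
  assumes "open U" "p \<in> U" "\<And>q. q \<in> U \<Longrightarrow> f differentiable at q"
    and fx: "pdx f differentiable at p" and fy: "pdy f differentiable at p"
  shows "dplus c (dminus c f) p = dminus c (dplus c f) p"
  using pdx_pdy_commute[OF assms] fx fy
  unfolding dplus_def dminus_def by (cases "c = 0") (simp_all add: field_simps)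

lemma pdx_comp_pair_null:
  fixes R S :: "real \<times> real \<Rightarrow> real" and G :: "real \<times> real \<Rightarrow> complex"
  assumes "\<delta> \<noteq> 0" "G differentiable at (R p, S p)" "R differentiable at p" "S differentiable at p"
  shows "pdx (\<lambda>q. G (R q, S q)) p =
      dplus \<delta> G (R p, S p) * pdx (Vmap \<delta> R S) p + dminus \<delta> G (R p, S p) * pdx (Wmap \<delta> R S) p"
    "pdy (\<lambda>q. G (R q, S q)) p =
      dplus \<delta> G (R p, S p) * pdy (Vmap \<delta> R S) p + dminus \<delta> G (R p, S p) * pdy (Wmap \<delta> R S) p"
  using assms
  by (simp_all add: dplus_def dminus_def pdx_comp_pair pdy_comp_pair Wmap_eq_Vmap_uminus pdx_Vmap pdy_Vmap
      field_simps)

lemma dplus_comp_pair: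
  fixes R S :: "real \<times> real \<Rightarrow> real" and G :: "real \<times> real \<Rightarrow> complex"
  assumes "\<delta> \<noteq> 0" "G differentiable at (R p, S p)" "R differentiable at p" "S differentiable at p"
  shows "dplus c (\<lambda>q. G (R q, S q)) p =
      dplus \<delta> G (R p, S p) * dplus c (Vmap \<delta> R S) p + dminus \<delta> G (R p, S p) * dplus c (Wmap \<delta> R S) p"
    "dminus c (\<lambda>q. G (R q, S q)) p =
      dplus \<delta> G (R p, S p) * dminus c (Vmap \<delta> R S) p + dminus \<delta> G (R p, S p) * dminus c (Wmap \<delta> R S) p"
  unfolding dplus_def[of c] dminus_def[of c] pdx_comp_pair_null[OF assms]
  by (simp_all add: algebra_simps add_divide_distrib diff_divide_distrib)

lemma Fx_eq_pdx_comp: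
  assumes "F differentiable at (R p, S p)" "R differentiable at p" "S differentiable at p"
  shows "complex_of_real (Fx F R S p) = pdx (\<lambda>q. Fc F (R q, S q)) p"
proof -
  have "Fc F differentiable at (R p, S p)" using assms(1) by (simp add: Fc_def)
  then show ?thesis
    using assms by (simp add: Fx_def pdx_comp_pair pdx_Fc[OF assms(1)] pdy_Fc[OF assms(1)] mult.commute)
qed

lemma Fy_eq_pdy_comp:
  assumes "F differentiable at (R p, S p)" "R differentiable at p" "S differentiable at p"
  shows "complex_of_real (Fy F R S p) = pdy (\<lambda>q. Fc F (R q, S q)) p"
proof -
  have "Fc F differentiable at (R p, S p)" using assms(1) by (simp add: Fc_def)
  then show ?thesis
    using assms by (simp add: Fy_def pdy_comp_pair pdx_Fc[OF assms(1)] pdy_Fc[OF assms(1)] mult.commute)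
qed

lemma exp_half_product:
  fixes x y z :: complex
  shows "exp (x / 2) * exp y * (exp (x / 2) * exp z) = exp x * exp (y + z)"
proof -
  have "exp x = exp (x / 2) * exp (x / 2)" by (simp flip: exp_add)
  then show ?thesis by (simp add: exp_add ac_simps)
qed

section \<open>Harmonic maps in a null frame\<close>

locale harmonic_null_frame =
  fixes \<epsilon> \<delta> :: complex
    and U D :: "(real \<times> real) set"
    and F R S :: "real \<times> real \<Rightarrow> real"
    and \<Omega> \<Theta> :: "real \<times> real \<Rightarrow> complex"
  assumes eps_nonzero: "\<epsilon> \<noteq> 0" and del_nonzero: "\<delta> \<noteq> 0"
    and U_open: "open U" and D_open: "open D"
    and F_smooth: "smooth2_on D F"
    and R_smooth: "smooth2_on U R" and S_smooth: "smooth2_on U S"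
    and Om_smooth: "smooth2_on U \<Omega>" and Th_smooth: "smooth2_on U \<Theta>"
    and u_maps: "\<And>p. p \<in> U \<Longrightarrow> (R p, S p) \<in> D"
    and harm: "harmonic_map \<epsilon> \<delta> F R S U"
    and Rx: "\<And>p. p \<in> U \<Longrightarrow> complex_of_real (pdx R p)
               = 2 * exp (- Fc F (R p, S p) / 2) * cosh (\<Omega> p) * cosh (\<Theta> p)"
    and Ry: "\<And>p. p \<in> U \<Longrightarrow> complex_of_real (pdy R p)
               = 2 * \<epsilon> * exp (- Fc F (R p, S p) / 2) * sinh (\<Omega> p) * sinh (\<Theta> p)"
    and Sx: "\<And>p. p \<in> U \<Longrightarrow> complex_of_real (pdx S p)
               = (2 / \<delta>) * exp (- Fc F (R p, S p) / 2) * cosh (\<Omega> p) * sinh (\<Theta> p)"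
    and Sy: "\<And>p. p \<in> U \<Longrightarrow> complex_of_real (pdy S p)
               = (2 * \<epsilon> / \<delta>) * exp (- Fc F (R p, S p) / 2) * sinh (\<Omega> p) * cosh (\<Theta> p)"
begin

abbreviation "u p \<equiv> (R p, S p)"
abbreviation "V \<equiv> Vmap \<delta> R S"
abbreviation "W \<equiv> Wmap \<delta> R S"
abbreviation "E p \<equiv> exp (- Fc F (u p) / 2)"

lemmas R_differentiable = smooth2_on_partials_differentiable[OF R_smooth U_open]
lemmas S_differentiable = smooth2_on_partials_differentiable[OF S_smooth U_open]
lemmas Theta_differentiable = smooth2_on_partials_differentiable[OF Th_smooth U_open]
lemmas Omega_differentiable = smooth2_on_partials_differentiable[OF Om_smooth U_open]
lemmas F_differentiable = smooth2_on_partials_differentiable[OF F_smooth D_open]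

lemma null_frame:
  assumes "p \<in> U"
  shows "dplus \<epsilon> V p = E p * exp (\<Theta> p + \<Omega> p)"
    and "dminus \<epsilon> V p = E p * exp (\<Theta> p - \<Omega> p)"
    and "dplus \<epsilon> W p = E p * exp (- \<Theta> p - \<Omega> p)"
    and "dminus \<epsilon> W p = E p * exp (\<Omega> p - \<Theta> p)"
  using assms eps_nonzero del_nonzero
  by (simp_all add: dplus_def dminus_def Wmap_eq_Vmap_uminus pdx_Vmap pdy_Vmap R_differentiable S_differentiable
      Rx Ry Sx Sy cosh_field_def sinh_field_def exp_add exp_diff exp_minus field_simps)

lemma V_partials_differentiable:
  assumes "p \<in> U"
  shows "pdx V differentiable at p" "pdy V differentiable at p"
    "pdx W differentiable at p" "pdy W differentiable at p"
  using partials_Vmap_differentiable[OF R_smooth S_smooth U_open assms]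
  unfolding Wmap_eq_Vmap_uminus by blast+

lemma V_differentiable:
  assumes "p \<in> U"
  shows "V differentiable at p" "W differentiable at p"
  using assms by (simp_all add: Wmap_eq_Vmap_uminus differentiable_Vmap R_differentiable S_differentiable)

lemma harmonic_V:
  assumes "p \<in> U"
  shows "dplus \<epsilon> (dminus \<epsilon> V) p = - FV \<delta> F (u p) * dplus \<epsilon> V p * dminus \<epsilon> V p"
    and "dminus \<epsilon> (dplus \<epsilon> V) p = - FV \<delta> F (u p) * dplus \<epsilon> V p * dminus \<epsilon> V p"
proof -
  show *: "dplus \<epsilon> (dminus \<epsilon> V) p = - FV \<delta> F (u p) * dplus \<epsilon> V p * dminus \<epsilon> V p"
    using harm assms unfolding harmonic_map_def by (simp add: eq_neg_iff_add_eq_0)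
  show "dminus \<epsilon> (dplus \<epsilon> V) p = - FV \<delta> F (u p) * dplus \<epsilon> V p * dminus \<epsilon> V p"
    using dplus_dminus_commute[OF U_open assms V_differentiable(1) V_partials_differentiable(1,2)[OF assms]] *
    by simp
qed

lemma harmonic_W:
  assumes "p \<in> U"
  shows "dplus \<epsilon> (dminus \<epsilon> W) p = - FW \<delta> F (u p) * dplus \<epsilon> W p * dminus \<epsilon> W p"
    and "dminus \<epsilon> (dplus \<epsilon> W) p = - FW \<delta> F (u p) * dplus \<epsilon> W p * dminus \<epsilon> W p"
proof -
  show *: "dplus \<epsilon> (dminus \<epsilon> W) p = - FW \<delta> F (u p) * dplus \<epsilon> W p * dminus \<epsilon> W p"
    using harm assms unfolding harmonic_map_def by (simp add: eq_neg_iff_add_eq_0)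
  show "dminus \<epsilon> (dplus \<epsilon> W) p = - FW \<delta> F (u p) * dplus \<epsilon> W p * dminus \<epsilon> W p"
    using dplus_dminus_commute[OF U_open assms V_differentiable(2) V_partials_differentiable(3,4)[OF assms]] *
    by simp
qed

lemma FV_FW_differentiable:
  assumes "q \<in> D"
  shows "FV \<delta> F differentiable at q" "FW \<delta> F differentiable at q"
  unfolding FV_def FW_def
  using dplus_differentiable partials_Fc_differentiable(2,3)[OF F_smooth D_open assms] by blast+

lemma FVW_commute:
  assumes "q \<in> D"
  shows "dminus \<delta> (FV \<delta> F) q = FVW \<delta> F q"
  unfolding FVW_def FV_def FW_def
  using dplus_dminus_commute[OF D_open assms partials_Fc_differentiable(1)[OF F_smooth D_open]
      partials_Fc_differentiable(2,3)[OF F_smooth D_open assms]]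
  by simp

lemma derivatives_along_u:
  assumes "p \<in> U"
  shows "dplus \<epsilon> (\<lambda>q. Fc F (u q)) p = FV \<delta> F (u p) * dplus \<epsilon> V p + FW \<delta> F (u p) * dplus \<epsilon> W p"
    and "dminus \<epsilon> (\<lambda>q. Fc F (u q)) p = FV \<delta> F (u p) * dminus \<epsilon> V p + FW \<delta> F (u p) * dminus \<epsilon> W p"
    and "dminus \<epsilon> (\<lambda>q. FV \<delta> F (u q)) p = FVV \<delta> F (u p) * dminus \<epsilon> V p + FVW \<delta> F (u p) * dminus \<epsilon> W p"
    and "dplus \<epsilon> (\<lambda>q. FV \<delta> F (u q)) p = FVV \<delta> F (u p) * dplus \<epsilon> V p + FVW \<delta> F (u p) * dplus \<epsilon> W p"
    and "dminus \<epsilon> (\<lambda>q. FW \<delta> F (u q)) p = FVW \<delta> F (u p) * dminus \<epsilon> V p + FWW \<delta> F (u p) * dminus \<epsilon> W p"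
    and "dplus \<epsilon> (\<lambda>q. FW \<delta> F (u q)) p = FVW \<delta> F (u p) * dplus \<epsilon> V p + FWW \<delta> F (u p) * dplus \<epsilon> W p"
proof -
  have q: "(u p) \<in> D" using u_maps assms .
  note chain = dplus_comp_pair[OF del_nonzero _ R_differentiable(1)[OF assms] S_differentiable(1)[OF assms]]
  note Fc = partials_Fc_differentiable(1)[OF F_smooth D_open q]
  show "dplus \<epsilon> (\<lambda>q. Fc F (u q)) p = FV \<delta> F (u p) * dplus \<epsilon> V p + FW \<delta> F (u p) * dplus \<epsilon> W p"
    "dminus \<epsilon> (\<lambda>q. Fc F (u q)) p = FV \<delta> F (u p) * dminus \<epsilon> V p + FW \<delta> F (u p) * dminus \<epsilon> W p"
    using chain[OF Fc] by (simp_all add: FV_def FW_def)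
  show "dminus \<epsilon> (\<lambda>q. FV \<delta> F (u q)) p = FVV \<delta> F (u p) * dminus \<epsilon> V p + FVW \<delta> F (u p) * dminus \<epsilon> W p"
    "dplus \<epsilon> (\<lambda>q. FV \<delta> F (u q)) p = FVV \<delta> F (u p) * dplus \<epsilon> V p + FVW \<delta> F (u p) * dplus \<epsilon> W p"
    using chain[OF FV_FW_differentiable(1)[OF q]] by (simp_all add: FVV_def FVW_commute[OF q])
  show "dminus \<epsilon> (\<lambda>q. FW \<delta> F (u q)) p = FVW \<delta> F (u p) * dminus \<epsilon> V p + FWW \<delta> F (u p) * dminus \<epsilon> W p"
    "dplus \<epsilon> (\<lambda>q. FW \<delta> F (u q)) p = FVW \<delta> F (u p) * dplus \<epsilon> V p + FWW \<delta> F (u p) * dplus \<epsilon> W p"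
    using chain[OF FV_FW_differentiable(2)[OF q]] by (simp_all add: FVW_def FWW_def)
qed

lemma F_comp_differentiable:
  assumes "p \<in> U"
  shows "(\<lambda>q. Fc F (u q)) differentiable at p"
  using partials_Fc_differentiable(1)[OF F_smooth D_open u_maps[OF assms]] R_differentiable(1)[OF assms] S_differentiable(1)[OF assms]
  by simp

lemma null_frame_exp:
  assumes "p \<in> U"
  shows "dplus \<epsilon> V p = exp (\<Theta> p + \<Omega> p - Fc F (u p) / 2)"
    and "dminus \<epsilon> V p = exp (\<Theta> p - \<Omega> p - Fc F (u p) / 2)"
  using null_frame[OF assms] by (simp_all add: mult_exp_exp algebra_simps)

lemma first_order_system:
  assumes "p \<in> U"
  shows "dplus \<epsilon> \<Theta> p - dplus \<epsilon> \<Omega> p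
      = (FW \<delta> F (u p) * dplus \<epsilon> W p - FV \<delta> F (u p) * dplus \<epsilon> V p) / 2"
    and "dminus \<epsilon> \<Theta> p + dminus \<epsilon> \<Omega> p
      = (FW \<delta> F (u p) * dminus \<epsilon> W p - FV \<delta> F (u p) * dminus \<epsilon> V p) / 2"
proof -
  let ?\<phi> = "\<lambda>q. Fc F (u q)"
  note diffs = Theta_differentiable(1)[OF assms] Omega_differentiable(1)[OF assms] F_comp_differentiable[OF assms]
  \<comment> \<open>V_w = e^(\<Theta> - \<Omega> - F/2), so its v-derivative is V_w times a log-derivative.\<close>
  have "dplus \<epsilon> (dminus \<epsilon> V) p = dminus \<epsilon> V p * (dplus \<epsilon> \<Theta> p - dplus \<epsilon> \<Omega> p - dplus \<epsilon> ?\<phi> p / 2)"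
    using dplus_cong(1)[OF U_open assms null_frame_exp(2)] diffs by (simp add: null_frame_exp(2)[OF assms])
  then have "dminus \<epsilon> V p * (dplus \<epsilon> \<Theta> p - dplus \<epsilon> \<Omega> p - dplus \<epsilon> ?\<phi> p / 2)
      = dminus \<epsilon> V p * (- FV \<delta> F (u p) * dplus \<epsilon> V p)"
    using harmonic_V(1)[OF assms] by (simp add: algebra_simps)
  then have "dplus \<epsilon> \<Theta> p - dplus \<epsilon> \<Omega> p - dplus \<epsilon> ?\<phi> p / 2 = - FV \<delta> F (u p) * dplus \<epsilon> V p"
    by (rule mult_left_cancel[THEN iffD1, rotated]) (simp add: null_frame_exp(2)[OF assms])
  then show "dplus \<epsilon> \<Theta> p - dplus \<epsilon> \<Omega> p
      = (FW \<delta> F (u p) * dplus \<epsilon> W p - FV \<delta> F (u p) * dplus \<epsilon> V p) / 2"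
    unfolding derivatives_along_u(1)[OF assms] by (simp add: field_simps)
  have "dminus \<epsilon> (dplus \<epsilon> V) p = dplus \<epsilon> V p * (dminus \<epsilon> \<Theta> p + dminus \<epsilon> \<Omega> p - dminus \<epsilon> ?\<phi> p / 2)"
    using dplus_cong(2)[OF U_open assms null_frame_exp(1)] diffs by (simp add: null_frame_exp(1)[OF assms])
  then have "dplus \<epsilon> V p * (dminus \<epsilon> \<Theta> p + dminus \<epsilon> \<Omega> p - dminus \<epsilon> ?\<phi> p / 2)
      = dplus \<epsilon> V p * (- FV \<delta> F (u p) * dminus \<epsilon> V p)"
    using harmonic_V(2)[OF assms] by (simp add: algebra_simps)
  then have "dminus \<epsilon> \<Theta> p + dminus \<epsilon> \<Omega> p - dminus \<epsilon> ?\<phi> p / 2 = - FV \<delta> F (u p) * dminus \<epsilon> V p"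
    by (rule mult_left_cancel[THEN iffD1, rotated]) (simp add: null_frame_exp(1)[OF assms])
  then show "dminus \<epsilon> \<Theta> p + dminus \<epsilon> \<Omega> p
      = (FW \<delta> F (u p) * dminus \<epsilon> W p - FV \<delta> F (u p) * dminus \<epsilon> V p) / 2"
    unfolding derivatives_along_u(2)[OF assms] by (simp add: field_simps)
qed

lemma frame_derivatives_differentiable:
  assumes "p \<in> U"
  shows "(\<lambda>q. FV \<delta> F (u q)) differentiable at p" "(\<lambda>q. FW \<delta> F (u q)) differentiable at p"
    "dplus \<epsilon> V differentiable at p" "dminus \<epsilon> V differentiable at p"
    "dplus \<epsilon> W differentiable at p" "dminus \<epsilon> W differentiable at p"
    "dplus \<epsilon> \<Theta> differentiable at p" "dminus \<epsilon> \<Theta> differentiable at p"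
    "dplus \<epsilon> \<Omega> differentiable at p" "dminus \<epsilon> \<Omega> differentiable at p"
  using FV_FW_differentiable[OF u_maps[OF assms]] R_differentiable(1)[OF assms] S_differentiable(1)[OF assms]
    dplus_differentiable[OF V_partials_differentiable(1,2)[OF assms]]
    dplus_differentiable[OF V_partials_differentiable(3,4)[OF assms]]
    dplus_differentiable[OF Theta_differentiable(2,3)[OF assms]]
    dplus_differentiable[OF Omega_differentiable(2,3)[OF assms]]
  by simp_all

lemma second_order_difference:
  assumes "p \<in> U"
  shows "dplus \<epsilon> (dminus \<epsilon> \<Theta>) p - dplus \<epsilon> (dminus \<epsilon> \<Omega>) p
      = (((FV \<delta> F (u p))\<^sup>2 - FVV \<delta> F (u p)) * dplus \<epsilon> V p * dminus \<epsilon> V p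
         - ((FW \<delta> F (u p))\<^sup>2 - FWW \<delta> F (u p)) * dplus \<epsilon> W p * dminus \<epsilon> W p
         + FVW \<delta> F (u p) * (dminus \<epsilon> V p * dplus \<epsilon> W p - dplus \<epsilon> V p * dminus \<epsilon> W p)) / 2"
proof -
  note diffs = frame_derivatives_differentiable[OF assms]
  have "dplus \<epsilon> (dminus \<epsilon> \<Theta>) p - dplus \<epsilon> (dminus \<epsilon> \<Omega>) p
      = dminus \<epsilon> (\<lambda>q. dplus \<epsilon> \<Theta> q - dplus \<epsilon> \<Omega> q) p"
    using dplus_dminus_commute[OF U_open assms Theta_differentiable(1) Theta_differentiable(2,3)[OF assms]]
      dplus_dminus_commute[OF U_open assms Omega_differentiable(1) Omega_differentiable(2,3)[OF assms]] diffs
    by simp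
  also have "\<dots> = dminus \<epsilon> (\<lambda>q. (FW \<delta> F (u q) * dplus \<epsilon> W q - FV \<delta> F (u q) * dplus \<epsilon> V q) / 2) p"
    by (rule dplus_cong(2)[OF U_open assms first_order_system(1)])
  also have "\<dots> = (dminus \<epsilon> (\<lambda>q. FW \<delta> F (u q)) p * dplus \<epsilon> W p
        + FW \<delta> F (u p) * dminus \<epsilon> (dplus \<epsilon> W) p
      - (dminus \<epsilon> (\<lambda>q. FV \<delta> F (u q)) p * dplus \<epsilon> V p
        + FV \<delta> F (u p) * dminus \<epsilon> (dplus \<epsilon> V) p)) / 2"
    using diffs by simp
  finally show ?thesis
    by (simp add: derivatives_along_u[OF assms] harmonic_V(2)[OF assms] harmonic_W(2)[OF assms]
        power2_eq_square algebra_simps)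
qed

lemma second_order_sum:
  assumes "p \<in> U"
  shows "dplus \<epsilon> (dminus \<epsilon> \<Theta>) p + dplus \<epsilon> (dminus \<epsilon> \<Omega>) p
      = (((FV \<delta> F (u p))\<^sup>2 - FVV \<delta> F (u p)) * dplus \<epsilon> V p * dminus \<epsilon> V p
         - ((FW \<delta> F (u p))\<^sup>2 - FWW \<delta> F (u p)) * dplus \<epsilon> W p * dminus \<epsilon> W p
         + FVW \<delta> F (u p) * (dplus \<epsilon> V p * dminus \<epsilon> W p - dminus \<epsilon> V p * dplus \<epsilon> W p)) / 2"
proof -
  note diffs = frame_derivatives_differentiable[OF assms]
  have "dplus \<epsilon> (dminus \<epsilon> \<Theta>) p + dplus \<epsilon> (dminus \<epsilon> \<Omega>) p
      = dplus \<epsilon> (\<lambda>q. dminus \<epsilon> \<Theta> q + dminus \<epsilon> \<Omega> q) p"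
    using diffs by simp
  also have "\<dots> = dplus \<epsilon> (\<lambda>q. (FW \<delta> F (u q) * dminus \<epsilon> W q - FV \<delta> F (u q) * dminus \<epsilon> V q) / 2) p"
    by (rule dplus_cong(1)[OF U_open assms first_order_system(2)])
  also have "\<dots> = (dplus \<epsilon> (\<lambda>q. FW \<delta> F (u q)) p * dminus \<epsilon> W p
        + FW \<delta> F (u p) * dplus \<epsilon> (dminus \<epsilon> W) p
      - (dplus \<epsilon> (\<lambda>q. FV \<delta> F (u q)) p * dminus \<epsilon> V p
        + FV \<delta> F (u p) * dplus \<epsilon> (dminus \<epsilon> V) p)) / 2"
    using diffs by simp
  finally show ?thesis
    by (simp add: derivatives_along_u[OF assms] harmonic_V(1)[OF assms] harmonic_W(1)[OF assms]
        power2_eq_square algebra_simps)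
qed

lemma null_frame_products:
  assumes "p \<in> U"
  shows "dplus \<epsilon> V p * dminus \<epsilon> V p = exp (- Fc F (u p)) * exp (2 * \<Theta> p)"
    and "dplus \<epsilon> W p * dminus \<epsilon> W p = exp (- Fc F (u p)) * exp (- 2 * \<Theta> p)"
    and "dplus \<epsilon> V p * dminus \<epsilon> W p = exp (- Fc F (u p)) * exp (2 * \<Omega> p)"
    and "dminus \<epsilon> V p * dplus \<epsilon> W p = exp (- Fc F (u p)) * exp (- 2 * \<Omega> p)"
  unfolding null_frame[OF assms] exp_half_product by simp_all

lemma theta_equation:
  assumes "p \<in> U"
  shows "2 * dplus \<epsilon> (dminus \<epsilon> \<Theta>) p
      = exp (- Fc F (u p)) *
        (((FV \<delta> F (u p))\<^sup>2 - FVV \<delta> F (u p)) * exp (2 * \<Theta> p)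
         - ((FW \<delta> F (u p))\<^sup>2 - FWW \<delta> F (u p)) * exp (- 2 * \<Theta> p))"
proof -
  have "2 * dplus \<epsilon> (dminus \<epsilon> \<Theta>) p
      = (dplus \<epsilon> (dminus \<epsilon> \<Theta>) p - dplus \<epsilon> (dminus \<epsilon> \<Omega>) p)
        + (dplus \<epsilon> (dminus \<epsilon> \<Theta>) p + dplus \<epsilon> (dminus \<epsilon> \<Omega>) p)"
    by simp
  also have "\<dots> = ((FV \<delta> F (u p))\<^sup>2 - FVV \<delta> F (u p)) * (dplus \<epsilon> V p * dminus \<epsilon> V p)
         - ((FW \<delta> F (u p))\<^sup>2 - FWW \<delta> F (u p)) * (dplus \<epsilon> W p * dminus \<epsilon> W p)"
    unfolding second_order_difference[OF assms] second_order_sum[OF assms] by (simp add: field_simps)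
  finally show ?thesis
    unfolding null_frame_products[OF assms] by (simp add: algebra_simps)
qed

lemma omega_equation:
  assumes "p \<in> U"
  shows "dplus \<epsilon> (dminus \<epsilon> \<Omega>) p = - (curvN \<delta> F (u p) / 2) * sinh (2 * \<Omega> p)"
proof -
  have "2 * dplus \<epsilon> (dminus \<epsilon> \<Omega>) p
      = (dplus \<epsilon> (dminus \<epsilon> \<Theta>) p + dplus \<epsilon> (dminus \<epsilon> \<Omega>) p)
        - (dplus \<epsilon> (dminus \<epsilon> \<Theta>) p - dplus \<epsilon> (dminus \<epsilon> \<Omega>) p)"
    by simp
  also have "\<dots> = FVW \<delta> F (u p) * (dplus \<epsilon> V p * dminus \<epsilon> W p - dminus \<epsilon> V p * dplus \<epsilon> W p)"
    unfolding second_order_difference[OF assms] second_order_sum[OF assms] by (simp add: field_simps)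
  also have "\<dots> = 2 * (FVW \<delta> F (u p) * exp (- Fc F (u p)) * sinh (2 * \<Omega> p))"
    unfolding null_frame_products[OF assms] sinh_field_def by (simp add: algebra_simps)
  finally show ?thesis
    unfolding curvN_def by simp
qed

lemma backlund_x:
  assumes "p \<in> U" "cosh (\<Omega> p) \<noteq> 0"
  shows "pdx \<Omega> p - pdy \<Theta> p / \<epsilon> = complex_of_real (Fx F R S p) / 2 * tanh (\<Omega> p)"
proof -
  let ?K = "FV \<delta> F (u p) * exp (\<Theta> p) + FW \<delta> F (u p) * exp (- \<Theta> p)"
  have "pdx \<Omega> p - pdy \<Theta> p / \<epsilon> = (dminus \<epsilon> \<Theta> p + dminus \<epsilon> \<Omega> p) - (dplus \<epsilon> \<Theta> p - dplus \<epsilon> \<Omega> p)"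
    using eps_nonzero by (simp add: pdx_eq_dplus_add_dminus[of _ _ \<epsilon>] pdy_eq_dplus_diff_dminus[of \<epsilon>])
  also have "\<dots> = E p * sinh (\<Omega> p) * ?K"
    unfolding first_order_system[OF assms(1)] null_frame[OF assms(1)] sinh_field_def
    by (simp add: exp_add exp_diff exp_minus field_simps)
  finally have lhs: "pdx \<Omega> p - pdy \<Theta> p / \<epsilon> = E p * sinh (\<Omega> p) * ?K" .
  have "complex_of_real (Fx F R S p)
      = dplus \<epsilon> (\<lambda>q. Fc F (u q)) p + dminus \<epsilon> (\<lambda>q. Fc F (u q)) p"
    using F_differentiable(1)[OF u_maps[OF assms(1)]] R_differentiable(1)[OF assms(1)] S_differentiable(1)[OF assms(1)]
    by (simp add: Fx_eq_pdx_comp pdx_eq_dplus_add_dminus[of _ _ \<epsilon>])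
  also have "\<dots> = 2 * E p * cosh (\<Omega> p) * ?K"
    unfolding derivatives_along_u(1,2)[OF assms(1)] null_frame[OF assms(1)] cosh_field_def
    by (simp add: exp_add exp_diff exp_minus field_simps)
  finally have rhs: "complex_of_real (Fx F R S p) = 2 * E p * cosh (\<Omega> p) * ?K" .
  show ?thesis
    unfolding lhs rhs tanh_def using assms(2) by simp
qed

lemma backlund_y:
  assumes "p \<in> U" "sinh (\<Omega> p) \<noteq> 0"
  shows "pdy \<Omega> p - \<epsilon> * pdx \<Theta> p = complex_of_real (Fy F R S p) / 2 * (cosh (\<Omega> p) / sinh (\<Omega> p))"
proof -
  let ?K = "FV \<delta> F (u p) * exp (\<Theta> p) - FW \<delta> F (u p) * exp (- \<Theta> p)"
  have "pdy \<Omega> p - \<epsilon> * pdx \<Theta> p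
      = - \<epsilon> * ((dplus \<epsilon> \<Theta> p - dplus \<epsilon> \<Omega> p) + (dminus \<epsilon> \<Theta> p + dminus \<epsilon> \<Omega> p))"
    using eps_nonzero
    by (simp add: pdx_eq_dplus_add_dminus[of _ _ \<epsilon>] pdy_eq_dplus_diff_dminus[of \<epsilon>] algebra_simps)
  also have "\<dots> = \<epsilon> * E p * cosh (\<Omega> p) * ?K"
    unfolding first_order_system[OF assms(1)] null_frame[OF assms(1)] cosh_field_def
    by (simp add: exp_add exp_diff exp_minus field_simps)
  finally have lhs: "pdy \<Omega> p - \<epsilon> * pdx \<Theta> p = \<epsilon> * E p * cosh (\<Omega> p) * ?K" .
  have "complex_of_real (Fy F R S p)
      = \<epsilon> * (dplus \<epsilon> (\<lambda>q. Fc F (u q)) p - dminus \<epsilon> (\<lambda>q. Fc F (u q)) p)"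
    using F_differentiable(1)[OF u_maps[OF assms(1)]] R_differentiable(1)[OF assms(1)] S_differentiable(1)[OF assms(1)] eps_nonzero
    by (simp add: Fy_eq_pdy_comp pdy_eq_dplus_diff_dminus[of \<epsilon>])
  also have "\<dots> = 2 * \<epsilon> * E p * sinh (\<Omega> p) * ?K"
    unfolding derivatives_along_u(1,2)[OF assms(1)] null_frame[OF assms(1)] sinh_field_def
    by (simp add: exp_add exp_diff exp_minus field_simps)
  finally have rhs: "complex_of_real (Fy F R S p) = 2 * \<epsilon> * E p * sinh (\<Omega> p) * ?K" .
  show ?thesis
    unfolding lhs rhs using assms(2) by simp
qed

end

theorem proposition4p1:
  fixes \<epsilon> \<delta> :: complex
    and U D :: "(real \<times> real) set"
    and F R S :: "real \<times> real \<Rightarrow> real"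
    and \<Omega> \<Theta> :: "real \<times> real \<Rightarrow> complex"
  assumes eps: "\<epsilon> \<in> {1, \<i>}" and del: "\<delta> \<in> {1, \<i>}"
    and U_open: "open U" and D_open: "open D"
    and F_smooth: "smooth2_on D F"
    and R_smooth: "smooth2_on U R" and S_smooth: "smooth2_on U S"
    and u_maps: "\<forall>p\<in>U. (R p, S p) \<in> D"
    and harm: "harmonic_map \<epsilon> \<delta> F R S U"
    and nontriv: "nontrivial_map \<epsilon> \<delta> R S U"
    and jac: "nonvanishing_jacobian R S U"
    and spec: "specific_coords \<epsilon> \<delta> F R S U"
    and Om_smooth: "smooth2_on U \<Omega>" and Th_smooth: "smooth2_on U \<Theta>"
    and Om_defined: "\<forall>p\<in>U. sinh (\<Omega> p) \<noteq> 0 \<and> cosh (\<Omega> p) \<noteq> 0"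
    and Rx: "\<forall>p\<in>U. complex_of_real (pdx R p)
               = 2 * exp (- Fc F (R p, S p) / 2) * cosh (\<Omega> p) * cosh (\<Theta> p)"
    and Ry: "\<forall>p\<in>U. complex_of_real (pdy R p)
               = 2 * \<epsilon> * exp (- Fc F (R p, S p) / 2) * sinh (\<Omega> p) * sinh (\<Theta> p)"
    and Sx: "\<forall>p\<in>U. complex_of_real (pdx S p)
               = (2 / \<delta>) * exp (- Fc F (R p, S p) / 2) * cosh (\<Omega> p) * sinh (\<Theta> p)"
    and Sy: "\<forall>p\<in>U. complex_of_real (pdy S p)
               = (2 * \<epsilon> / \<delta>) * exp (- Fc F (R p, S p) / 2) * sinh (\<Omega> p) * cosh (\<Theta> p)"
  shows "\<forall>p\<in>U.
      2 * dplus \<epsilon> (dminus \<epsilon> \<Theta>) p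
        = exp (- Fc F (R p, S p)) *
          (((FV \<delta> F (R p, S p))\<^sup>2 - FVV \<delta> F (R p, S p)) * exp (2 * \<Theta> p)
           - ((FW \<delta> F (R p, S p))\<^sup>2 - FWW \<delta> F (R p, S p)) * exp (- 2 * \<Theta> p))
    \<and> dplus \<epsilon> (dminus \<epsilon> \<Omega>) p = - (curvN \<delta> F (R p, S p) / 2) * sinh (2 * \<Omega> p)
    \<and> pdx \<Omega> p - pdy \<Theta> p / \<epsilon> = complex_of_real (Fx F R S p) / 2 * tanh (\<Omega> p)
    \<and> pdy \<Omega> p - \<epsilon> * pdx \<Theta> p
        = complex_of_real (Fy F R S p) / 2 * (cosh (\<Omega> p) / sinh (\<Omega> p))"
proof -
  interpret harmonic_null_frame \<epsilon> \<delta> U D F R S \<Omega> \<Theta>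
    using eps del U_open D_open F_smooth R_smooth S_smooth Om_smooth Th_smooth u_maps harm Rx Ry Sx Sy
    by unfold_locales auto
  show ?thesis
    using theta_equation omega_equation backlund_x backlund_y Om_defined by blast
qed

end
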